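(* Let $n$ and $b$ be integers with $1\le b<\frac{n}{2}-1$, and let $BT\in\mathcal{CT}^*_{n,b}$. Then \[ M_1(BT)\le\begin{cases}2(2n+3b-3) & \text{if } 1\le b<\frac{n-2}{3},\\ 2(4n-3b-7) & \text{if } \frac{n-2}{3}\le b<\frac{n}{2}-1.\end{cases} \] For $1\le b<\frac{n-2}{3}$, equality holds if and only if $BT$ has degree sequence consisting of $b$ entries $4$, $n-3b-2$ entries $2$ and $2b+2$ entries $1$. For $\frac{n-2}{3}\le b<\frac{n}{2}-1$, equality holds if and only if $BT$ has degree sequence consisting of $n-2b-2$ entries $4$, $3b-n+2$ entries $3$ and $n-b$ entries $1$.
   Context: A chemical tree is a tree with maximum degree at most $4$. A branching vertex is a vertex of degree greater than $2$. $\mathcal{CT}^*_{n,b}$ denotes the class of all $n$-vertex chemical trees with exactly $b$ branching vertices. The first Zagreb index is $M_1(G)=\sum_{v\in V(G)}d_v^2$, where $d_v$ is the degree of $v$. *)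

theory Defs
  imports Complex_Main "HOL-Library.Multiset"
begin

definition simple_graph :: "'a set \<Rightarrow> 'a set set \<Rightarrow> bool" where
  "simple_graph V E \<longleftrightarrow> finite V \<and> (\<forall>e\<in>E. e \<subseteq> V \<and> card e = 2)"

definition adj :: "'a set set \<Rightarrow> 'a \<Rightarrow> 'a \<Rightarrow> bool" where
  "adj E u v \<longleftrightarrow> {u, v} \<in> E"

definition connected_in :: "'a set set \<Rightarrow> 'a \<Rightarrow> 'a \<Rightarrow> bool" where
  "connected_in E u v \<longleftrightarrow> (adj E)\<^sup>*\<^sup>* u v"

definition connected_graph :: "'a set \<Rightarrow> 'a set set \<Rightarrow> bool" where
  "connected_graph V E \<longleftrightarrow> (\<forall>u\<in>V. \<forall>v\<in>V. connected_in E u v)"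

text \<open>Acyclic: every edge is a bridge (its endpoints are disconnected once it is removed).\<close>
definition acyclic_graph :: "'a set set \<Rightarrow> bool" where
  "acyclic_graph E \<longleftrightarrow> (\<forall>u v. {u, v} \<in> E \<longrightarrow> \<not> connected_in (E - {{u, v}}) u v)"

definition is_tree :: "'a set \<Rightarrow> 'a set set \<Rightarrow> bool" where
  "is_tree V E \<longleftrightarrow> simple_graph V E \<and> V \<noteq> {} \<and> connected_graph V E \<and> acyclic_graph E"

definition degree :: "'a set set \<Rightarrow> 'a \<Rightarrow> nat" where
  "degree E v = card {e \<in> E. v \<in> e}"

definition chemical_tree :: "'a set \<Rightarrow> 'a set set \<Rightarrow> bool" where
  "chemical_tree V E \<longleftrightarrow> is_tree V E \<and> (\<forall>v\<in>V. degree E v \<le> 4)"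

definition branching_vertices :: "'a set \<Rightarrow> 'a set set \<Rightarrow> 'a set" where
  "branching_vertices V E = {v \<in> V. degree E v > 2}"

definition CT_star :: "nat \<Rightarrow> nat \<Rightarrow> 'a set \<Rightarrow> 'a set set \<Rightarrow> bool" where
  "CT_star n b V E \<longleftrightarrow> chemical_tree V E \<and> card V = n \<and> card (branching_vertices V E) = b"

definition first_zagreb :: "'a set \<Rightarrow> 'a set set \<Rightarrow> nat" where
  "first_zagreb V E = (\<Sum>v\<in>V. (degree E v)^2)"

definition degree_sequence :: "'a set \<Rightarrow> 'a set set \<Rightarrow> nat multiset" where
  "degree_sequence V E = image_mset (degree E) (mset_set V)"

end

(*
  Let n_i be the number of vertices of degree i. Counting vertices, degrees (a tree has n - 1
  edges) and branching vertices gives n_1 + n_2 + n_3 + n_4 = n,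
  n_1 + 2 n_2 + 3 n_3 + 4 n_4 = 2n - 2 and n_3 + n_4 = b. So the degree sequence is determined
  by k = n_4: n_1 = b + k + 2, n_2 = n - 2b - k - 2, n_3 = b - k, and M_1 = 2(2n + b - 3) + 4k.
  Hence M_1 is maximal exactly when k attains its largest admissible value min(b, n - 2b - 2),
  which is b if 3b + 2 < n and n - 2b - 2 otherwise.
*)

theory Submission
  imports Defs
begin

lemma adj_sym: "adj E u v \<Longrightarrow> adj E v u"
  by (simp add: adj_def insert_commute)

lemma connected_in_sym: "connected_in E u v \<Longrightarrow> connected_in E v u"
  unfolding connected_in_def by (metis adj_sym sympD sympI symp_rtranclp)

lemma connected_in_trans:
  "connected_in E u v \<Longrightarrow> connected_in E v w \<Longrightarrow> connected_in E u w"
  unfolding connected_in_def by (meson rtranclp_trans)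

lemma connected_in_mono: "E \<subseteq> F \<Longrightarrow> connected_in E u v \<Longrightarrow> connected_in F u v"
  unfolding connected_in_def by (metis (no_types, lifting) adj_def in_mono mono_rtranclp)

lemma connected_in_edge: "connected_in E u w \<Longrightarrow> {w, x} \<in> E \<Longrightarrow> connected_in E u x"
  unfolding connected_in_def adj_def by (simp add: rtranclp.rtrancl_into_rtrancl)

lemma acyclic_graph_subset: "acyclic_graph F \<Longrightarrow> G \<subseteq> F \<Longrightarrow> acyclic_graph G"
  unfolding acyclic_graph_def by (meson Diff_mono connected_in_mono order_refl subset_iff)

lemma simple_graph_finite_edges: "simple_graph V E \<Longrightarrow> finite E"
  unfolding simple_graph_def by (meson Pow_iff finite_Pow_iff finite_subset subsetI)

lemma connected_in_delete_edge:
  assumes "connected_in E u w" "{u, v} \<in> E"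
  shows "connected_in (E - {{u, v}}) u w \<or> connected_in (E - {{u, v}}) v w"
  using assms(1) unfolding connected_in_def
proof (induction rule: rtranclp_induct)
  case (step w x)
  show ?case
  proof (cases "{w, x} = {u, v}")
    case True
    then have "x = u \<or> x = v" by (metis doubleton_eq_iff)
    then show ?thesis by auto
  next
    case False
    then have "{w, x} \<in> E - {{u, v}}" using step(2) by (auto simp: adj_def)
    then show ?thesis using step(3) connected_in_edge unfolding connected_in_def by metis
  qed
qed simp

definition component :: "'a set \<Rightarrow> 'a set set \<Rightarrow> 'a \<Rightarrow> 'a set" where
  "component V E u = {w \<in> V. connected_in E u w}"

definition induced_edges :: "'a set set \<Rightarrow> 'a set \<Rightarrow> 'a set set" where
  "induced_edges E A = {e \<in> E. e \<subseteq> A}"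

lemma connected_in_induced_component:
  assumes "\<forall>e\<in>E. e \<subseteq> V" "connected_in E u w"
  shows "connected_in (induced_edges E (component V E u)) u w"
  using assms(2) unfolding connected_in_def
proof (induction rule: rtranclp_induct)
  case (step w x)
  have "{w, x} \<in> E" using step(2) by (simp add: adj_def)
  moreover have "(adj E)\<^sup>*\<^sup>* u x" using step(1,2) by (rule rtranclp.rtrancl_into_rtrancl)
  ultimately have "adj (induced_edges E (component V E u)) w x"
    using assms(1) step(1) by (auto simp: adj_def induced_edges_def component_def connected_in_def)
  then show ?case by (rule rtranclp.rtrancl_into_rtrancl[OF step(3)])
qed simp

lemma is_tree_component:
  assumes "simple_graph V E" "acyclic_graph E" "u \<in> V"
  shows "is_tree (component V E u) (induced_edges E (component V E u))"
proof -
  let ?A = "component V E u"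
  have "connected_in (induced_edges E ?A) u w" if "w \<in> ?A" for w
    using assms(1) that connected_in_induced_component[of E V u w]
    by (simp add: simple_graph_def component_def)
  then have "connected_graph ?A (induced_edges E ?A)"
    unfolding connected_graph_def by (metis connected_in_sym connected_in_trans)
  moreover have "acyclic_graph (induced_edges E ?A)"
    using acyclic_graph_subset[OF assms(2)] by (auto simp: induced_edges_def)
  moreover have "u \<in> ?A" using assms(3) by (simp add: component_def connected_in_def)
  ultimately show ?thesis
    using assms(1) by (auto simp: is_tree_def simple_graph_def component_def induced_edges_def)
qed

lemma tree_delete_edge_components:
  assumes "is_tree V E" "{u, v} \<in> E"
  defines "F \<equiv> E - {{u, v}}"
  shows "component V F u \<inter> component V F v = {}"
    and "component V F u \<union> component V F v = V"
proof -
  have "\<not> connected_in F u v" using assms by (simp add: is_tree_def acyclic_graph_def)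
  moreover have "connected_in F u v" if "connected_in F u w" "connected_in F v w" for w
    using that connected_in_sym connected_in_trans by metis
  ultimately show "component V F u \<inter> component V F v = {}"
    unfolding component_def by blast
  have "u \<in> V" using assms(1,2) by (auto simp: is_tree_def simple_graph_def)
  then have "connected_in E u w" if "w \<in> V" for w
    using assms(1) that by (simp add: is_tree_def connected_graph_def)
  then show "component V F u \<union> component V F v = V"
    using connected_in_delete_edge[OF _ assms(2)] unfolding F_def component_def by auto
qed

lemma card_edges_two_components:
  assumes "simple_graph V F"
    and "component V F u \<inter> component V F v = {}" "component V F u \<union> component V F v = V"
  shows "card F = card (induced_edges F (component V F u)) + card (induced_edges F (component V F v))"
proof -
  have "e \<subseteq> component V F u \<or> e \<subseteq> component V F v" if "e \<in> F" for e
  proof -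
    have "e \<subseteq> V" "card e = 2" using that assms(1) by (auto simp: simple_graph_def)
    then obtain x y where e: "e = {x, y}" "x \<in> V" "y \<in> V" by (auto simp: card_2_iff)
    have "connected_in F w y" if "connected_in F w x" for w
      using that \<open>e \<in> F\<close> e(1) by (simp add: connected_in_edge)
    moreover have "x \<in> component V F u \<or> x \<in> component V F v"
      using assms(3) e(2) by blast
    ultimately show ?thesis using e by (auto simp: component_def)
  qed
  then have "F = induced_edges F (component V F u) \<union> induced_edges F (component V F v)"
    by (auto simp: induced_edges_def)
  moreover have "{} \<notin> F" using assms(1) by (auto simp: simple_graph_def)
  then have "induced_edges F (component V F u) \<inter> induced_edges F (component V F v) = {}"
    using assms(2) by (auto simp: induced_edges_def) (metis Int_greatest subset_empty)
  moreover have "finite F" using assms(1) by (rule simple_graph_finite_edges)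
  ultimately show ?thesis by (metis card_Un_disjoint finite_Un)
qed

lemma tree_card_vertices: "is_tree V E \<Longrightarrow> card V = card E + 1"
proof (induction "card E" arbitrary: V E rule: less_induct)
  case less
  have sg: "simple_graph V E" and fE: "finite E"
    using less(2) simple_graph_finite_edges by (auto simp: is_tree_def)
  then have fV: "finite V" by (simp add: simple_graph_def)
  show ?case
  proof (cases "E = {}")
    case True
    then have "adj E = (\<lambda>_ _. False)" by (auto simp: fun_eq_iff adj_def)
    moreover have "(adj E)\<^sup>*\<^sup>* u w" if "u \<in> V" "w \<in> V" for u w
      using less(2) that by (simp add: is_tree_def connected_graph_def connected_in_def)
    ultimately have "u = w" if "u \<in> V" "w \<in> V" for u w
      using that by (metis rtranclp.cases)
    moreover obtain w where "w \<in> V" using less(2) by (auto simp: is_tree_def)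
    ultimately have "V = {w}" by blast
    then show ?thesis using True by simp
  next
    case False
    then obtain u v where uv: "{u, v} \<in> E"
      using sg unfolding simple_graph_def by (metis card_2_iff ex_in_conv)
    define F where "F = E - {{u, v}}"
    define A where "A = component V F u"
    define B where "B = component V F v"
    have sgF: "simple_graph V F" using sg by (auto simp: F_def simple_graph_def)
    have acF: "acyclic_graph F"
      using less(2) acyclic_graph_subset[of E F] by (auto simp: F_def is_tree_def)
    have uV: "u \<in> V" "v \<in> V" using sg uv by (auto simp: simple_graph_def)
    have AB: "A \<inter> B = {}" "A \<union> B = V"
      using tree_delete_edge_components[OF less(2) uv(1)] by (simp_all add: A_def B_def F_def)
    have cF: "card F = card (induced_edges F A) + card (induced_edges F B)"
      using card_edges_two_components[OF sgF] AB by (simp add: A_def B_def)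
    have cE: "card E = card F + 1" using card_Suc_Diff1[OF fE uv(1)] by (simp add: F_def)
    have "card A = card (induced_edges F A) + 1" "card B = card (induced_edges F B) + 1"
      using less(1) is_tree_component[OF sgF acF] uV cF cE by (auto simp: A_def B_def)
    moreover have "card V = card A + card B" using AB fV by (metis card_Un_disjoint finite_Un)
    ultimately show ?thesis using cF cE by simp
  qed
qed

lemma sum_degree_eq_twice_card_edges:
  assumes "simple_graph V E"
  shows "(\<Sum>v\<in>V. degree E v) = 2 * card E"
proof -
  have fV: "finite V" and fE: "finite E"
    using assms simple_graph_finite_edges by (auto simp: simple_graph_def)
  have "(\<Sum>v\<in>V. degree E v) = (\<Sum>v\<in>V. \<Sum>e\<in>E. if v \<in> e then 1 else 0)"
    unfolding degree_def using fE by (simp add: sum.inter_filter[symmetric])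
  also have "\<dots> = (\<Sum>e\<in>E. card {v\<in>V. v \<in> e})"
    using fV by (subst sum.swap) (simp add: sum.inter_filter[symmetric])
  also have "\<dots> = (\<Sum>e\<in>E. 2)"
  proof (rule sum.cong)
    fix e assume "e \<in> E"
    then have "{v \<in> V. v \<in> e} = e" "card e = 2" using assms by (auto simp: simple_graph_def)
    then show "card {v \<in> V. v \<in> e} = 2" by simp
  qed simp
  finally show ?thesis by simp
qed

lemma degree_ge_one:
  assumes "connected_graph V E" "finite E" "v \<in> V" "2 \<le> card V"
  shows "1 \<le> degree E v"
proof -
  have "\<not> V \<subseteq> {v}"
    using assms(4) card_mono[of "{v}" V] by auto
  then obtain w where "w \<in> V" "w \<noteq> v" by blast
  then have "(adj E)\<^sup>*\<^sup>* v w"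
    using assms(1,3) by (simp add: connected_graph_def connected_in_def)
  then obtain y where "{v, y} \<in> E"
    using \<open>w \<noteq> v\<close> by (metis adj_def converse_rtranclpE)
  then have "{e \<in> E. v \<in> e} \<noteq> {}" by blast
  then show ?thesis using assms(2) by (simp add: degree_def Suc_le_eq card_gt_0_iff)
qed

lemma sum_mset_image_degree_sequence:
  "sum_mset (image_mset f (degree_sequence V E)) = (\<Sum>v\<in>V. f (degree E v))"
  by (simp add: degree_sequence_def sum_unfold_sum_mset image_mset.compositionality comp_def)

lemma first_zagreb_eq_sum_mset:
  "first_zagreb V E = sum_mset (image_mset (\<lambda>d. d\<^sup>2) (degree_sequence V E))"
  by (simp add: first_zagreb_def sum_mset_image_degree_sequence)

lemma mset_eq_sum_replicate_count:
  assumes "finite A" "set_mset D \<subseteq> A"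
  shows "D = (\<Sum>x\<in>A. replicate_mset (count D x) x)"
proof (rule multiset_eqI)
  fix y
  have "count (\<Sum>x\<in>A. replicate_mset (count D x) x) y
          = (\<Sum>x\<in>A. if y = x then count D x else 0)"
    by (simp add: count_sum)
  also have "\<dots> = count D y"
    using assms by (auto simp: sum.delta' count_eq_zero_iff)
  finally show "count D y = count (\<Sum>x\<in>A. replicate_mset (count D x) x) y" ..
qed

definition chemical_tree_degree_sequence :: "nat \<Rightarrow> nat \<Rightarrow> nat \<Rightarrow> nat multiset" where
  "chemical_tree_degree_sequence n b k = replicate_mset (b + k + 2) 1
     + replicate_mset (n - 2 * b - k - 2) 2 + replicate_mset (b - k) 3 + replicate_mset k 4"

lemma CT_star_degree_sequence:
  assumes "CT_star n b V E" "2 \<le> n"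
  obtains k where "k \<le> b" "2 * b + k + 2 \<le> n"
    and "degree_sequence V E = chemical_tree_degree_sequence n b k"
proof -
  have tree: "is_tree V E" and deg4: "\<forall>v\<in>V. degree E v \<le> 4" and n: "card V = n"
    and b: "card {v \<in> V. 2 < degree E v} = b"
    using assms(1) by (auto simp: CT_star_def chemical_tree_def branching_vertices_def)
  have sg: "simple_graph V E" and fV: "finite V" and fE: "finite E"
    using tree simple_graph_finite_edges by (auto simp: is_tree_def simple_graph_def)
  have "1 \<le> degree E v" if "v \<in> V" for v
    using degree_ge_one[of V E v] tree fE n assms(2) that by (simp add: is_tree_def)
  then have "degree E v \<in> {1, 2, 3, 4}" if "v \<in> V" for v
    using deg4 that by (simp only: insert_iff empty_iff) fastforce
  then have degree_range: "set_mset (degree_sequence V E) \<subseteq> {1, 2, 3, 4}"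
    using fV by (auto simp: degree_sequence_def)
  define c where "c = count (degree_sequence V E)"
  have "degree_sequence V E = (\<Sum>d\<in>{1, 2, 3, 4}. replicate_mset (c d) d)"
    unfolding c_def by (rule mset_eq_sum_replicate_count) (use degree_range in simp_all)
  also have "\<dots> = replicate_mset (c 1) 1 + replicate_mset (c 2) 2
                   + replicate_mset (c 3) 3 + replicate_mset (c 4) 4"
    by (simp add: add_ac)
  finally have D: "degree_sequence V E = replicate_mset (c 1) 1 + replicate_mset (c 2) 2
                                         + replicate_mset (c 3) 3 + replicate_mset (c 4) (4::nat)" .
  have degree_sums: "(\<Sum>v\<in>V. f (degree E v)) = c 1 * f 1 + c 2 * f 2 + c 3 * f 3 + c 4 * f 4"
    for f :: "nat \<Rightarrow> nat"
    by (simp add: sum_mset_image_degree_sequence[symmetric] D)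
  have vertices: "c 1 + c 2 + c 3 + c 4 = n"
    using degree_sums[of "\<lambda>_. 1"] n by simp
  have edges: "c 1 + 2 * c 2 + 3 * c 3 + 4 * c 4 + 2 = 2 * n"
    using degree_sums[of "\<lambda>d. d"] sum_degree_eq_twice_card_edges[OF sg]
      tree_card_vertices[OF tree] n
    by simp
  have "b = (\<Sum>v\<in>V. if 2 < degree E v then 1 else 0)"
    using b fV by (simp add: sum.inter_filter[symmetric])
  then have branching: "c 3 + c 4 = b"
    using degree_sums[of "\<lambda>d. if 2 < d then 1 else 0"] by simp
  show thesis
  proof (rule that[of "c 4"])
    show "c 4 \<le> b" "2 * b + c 4 + 2 \<le> n"
      using vertices edges branching by linarith+
    have "c 1 = b + c 4 + 2" "c 2 = n - 2 * b - c 4 - 2" "c 3 = b - c 4"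
      using vertices edges branching by linarith+
    then show "degree_sequence V E = chemical_tree_degree_sequence n b (c 4)"
      using D by (simp add: chemical_tree_degree_sequence_def)
  qed
qed

lemma sum_squares_chemical_tree_degree_sequence:
  assumes "k \<le> b" "2 * b + k + 2 \<le> n"
  shows "int (sum_mset (image_mset (\<lambda>d. d\<^sup>2) (chemical_tree_degree_sequence n b k)))
           = 2 * (2 * int n + int b - 3) + 4 * int k"
proof -
  have "sum_mset (image_mset (\<lambda>d. d\<^sup>2) (chemical_tree_degree_sequence n b k)) + 6
          = (b + k + 2) + 4 * (n - 2 * b - k - 2) + 9 * (b - k) + 16 * k + 6"
    by (simp add: chemical_tree_degree_sequence_def)
  also have "\<dots> = 4 * n + 2 * b + 4 * k"
    using assms by arith
  finally show ?thesis
    using arg_cong[of _ _ int] by fastforce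
qed

lemma chemical_tree_degree_sequence_eq_iff:
  assumes "k \<le> b" "2 * b + k + 2 \<le> n"
  shows "chemical_tree_degree_sequence n b k
           = replicate_mset b 4 + replicate_mset (n - 3 * b - 2) 2 + replicate_mset (2 * b + 2) 1
         \<longleftrightarrow> k = b"
    and "chemical_tree_degree_sequence n b k
           = replicate_mset (n - 2 * b - 2) 4 + replicate_mset (3 * b + 2 - n) 3
             + replicate_mset (n - b) 1
         \<longleftrightarrow> k + 2 * b + 2 = n"
proof -
  have count4: "count (chemical_tree_degree_sequence n b k) 4 = k"
    by (simp add: chemical_tree_degree_sequence_def)
  show "chemical_tree_degree_sequence n b k
          = replicate_mset b 4 + replicate_mset (n - 3 * b - 2) 2 + replicate_mset (2 * b + 2) 1
        \<longleftrightarrow> k = b"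
  proof
    assume "k = b"
    then show "chemical_tree_degree_sequence n b k
        = replicate_mset b 4 + replicate_mset (n - 3 * b - 2) 2 + replicate_mset (2 * b + 2) 1"
      by (auto simp: chemical_tree_degree_sequence_def multiset_eq_iff)
  qed (use count4 in auto)
  show "chemical_tree_degree_sequence n b k
          = replicate_mset (n - 2 * b - 2) 4 + replicate_mset (3 * b + 2 - n) 3
            + replicate_mset (n - b) 1
        \<longleftrightarrow> k + 2 * b + 2 = n"
  proof
    assume "k + 2 * b + 2 = n"
    then show "chemical_tree_degree_sequence n b k
        = replicate_mset (n - 2 * b - 2) 4 + replicate_mset (3 * b + 2 - n) 3
          + replicate_mset (n - b) 1"
      using assms by (auto simp: chemical_tree_degree_sequence_def multiset_eq_iff)
  qed (use count4 assms in auto)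
qed

theorem theorem3:
  fixes V :: "'a set" and E :: "'a set set" and n b :: nat
  assumes "1 \<le> b" and "real b < real n / 2 - 1"
    and "CT_star n b V E"
  shows "(real b < (real n - 2) / 3 \<longrightarrow>
            int (first_zagreb V E) \<le> 2 * (2 * int n + 3 * int b - 3) \<and>
            (int (first_zagreb V E) = 2 * (2 * int n + 3 * int b - 3) \<longleftrightarrow>
             degree_sequence V E = replicate_mset b 4 + replicate_mset (n - 3 * b - 2) 2
                                    + replicate_mset (2 * b + 2) 1))
       \<and> ((real n - 2) / 3 \<le> real b \<longrightarrow>
            int (first_zagreb V E) \<le> 2 * (4 * int n - 3 * int b - 7) \<and>
            (int (first_zagreb V E) = 2 * (4 * int n - 3 * int b - 7) \<longleftrightarrow>
             degree_sequence V E = replicate_mset (n - 2 * b - 2) 4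
                                    + replicate_mset (3 * b + 2 - n) 3
                                    + replicate_mset (n - b) 1))"
proof -
  have "2 * b + 2 \<le> n" using assms(2) by linarith
  then obtain k where k: "k \<le> b" "2 * b + k + 2 \<le> n"
    and D: "degree_sequence V E = chemical_tree_degree_sequence n b k"
    using CT_star_degree_sequence[OF assms(3)] by auto
  have zagreb: "int (first_zagreb V E) = 2 * (2 * int n + int b - 3) + 4 * int k"
    unfolding first_zagreb_eq_sum_mset D using sum_squares_chemical_tree_degree_sequence[OF k] .
  have regime: "real b < (real n - 2) / 3 \<longleftrightarrow> 3 * b + 2 < n"
    "(real n - 2) / 3 \<le> real b \<longleftrightarrow> n \<le> 3 * b + 2"
    by (simp_all add: field_simps) linarith+
  show ?thesis
    unfolding regime D chemical_tree_degree_sequence_eq_iff[OF k] using zagreb k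
    by (intro conjI impI iffI; arith)
qed

end
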